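(* Let $X$ be a Banach space, let $A$ be a closed, densely defined operator on $X$, and let $B$ be a bounded, one-to-one operator on $X$ whose range does not contain all of $\textnormal{D}(A)$. If $AB$ (on its natural domain $\{x\in X: Bx\in\textnormal{D}(A)\}$) is Fredholm, $\textnormal{D}(AB)$ (with the graph norm of $AB$) is compactly embedded in $X$, and the resolvent set $\rho(A)$ is nonempty, then $\operatorname{ind}(AB) < 0$.
   Context: An operator is Fredholm if it is densely defined, closed, has finite-dimensional nullspace, closed range, and range of finite codimension; its index is $\operatorname{ind}(L) = \dim\textnormal{N}(L) - \operatorname{codim}\textnormal{R}(L)$. $\rho(A)$ is the set of $\lambda\in\mathbb{C}$ such that $A-\lambda$ has a bounded inverse. Compactly embedded means the inclusion map into $X$ is compact. *)

theory Defs
  imports "HOL-Analysis.Analysis"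
begin

text \<open>HOL-Analysis has no class of complex normed spaces.  A complex Banach space
is modelled as a real Banach space (type class banach) together with a complex
structure J (multiplication by i): a bounded real-linear map with J (J x) = - x
and such that multiplication by unimodular scalars e^(i t) is isometric.\<close>

definition cstruct :: "('a::banach \<Rightarrow> 'a) \<Rightarrow> bool" where
  "cstruct J \<longleftrightarrow> bounded_linear J \<and> (\<forall>x. J (J x) = - x) \<and>
     (\<forall>x t. norm (cos t *\<^sub>R x + sin t *\<^sub>R J x) = norm x)"

definition cscale :: "('a::banach \<Rightarrow> 'a) \<Rightarrow> complex \<Rightarrow> 'a \<Rightarrow> 'a" where
  "cscale J z x = Re z *\<^sub>R x + Im z *\<^sub>R J x"

definition csubspace :: "('a::banach \<Rightarrow> 'a) \<Rightarrow> 'a set \<Rightarrow> bool" where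
  "csubspace J S \<longleftrightarrow> subspace S \<and> (\<forall>x\<in>S. J x \<in> S)"

definition cspan :: "('a::banach \<Rightarrow> 'a) \<Rightarrow> 'a set \<Rightarrow> 'a set" where
  "cspan J S = span (S \<union> J ` S)"

definition clinear_on :: "('a::banach \<Rightarrow> 'a) \<Rightarrow> 'a set \<Rightarrow> ('a \<Rightarrow> 'a) \<Rightarrow> bool" where
  "clinear_on J D T \<longleftrightarrow> csubspace J D \<and>
     (\<forall>x\<in>D. \<forall>y\<in>D. T (x + y) = T x + T y) \<and>
     (\<forall>c. \<forall>x\<in>D. T (c *\<^sub>R x) = c *\<^sub>R T x) \<and>
     (\<forall>x\<in>D. T (J x) = J (T x))"

definition densely_defined :: "'a::banach set \<Rightarrow> bool" where
  "densely_defined D \<longleftrightarrow> closure D = UNIV"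

definition closed_op :: "'a::banach set \<Rightarrow> ('a \<Rightarrow> 'a) \<Rightarrow> bool" where
  "closed_op D T \<longleftrightarrow> closed {(x, T x) | x. x \<in> D}"

definition null_space :: "'a::banach set \<Rightarrow> ('a \<Rightarrow> 'a) \<Rightarrow> 'a set" where
  "null_space D T = {x \<in> D. T x = 0}"

definition range_op :: "'a::banach set \<Rightarrow> ('a \<Rightarrow> 'a) \<Rightarrow> 'a set" where
  "range_op D T = T ` D"

definition cfinite_dim :: "('a::banach \<Rightarrow> 'a) \<Rightarrow> 'a set \<Rightarrow> bool" where
  "cfinite_dim J S \<longleftrightarrow> (\<exists>B. finite B \<and> cspan J B = S)"

definition cdim :: "('a::banach \<Rightarrow> 'a) \<Rightarrow> 'a set \<Rightarrow> nat" where
  "cdim J S = (LEAST n. \<exists>B. finite B \<and> card B = n \<and> cspan J B = S)"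

text \<open>codimension of a subspace R of X = complex dimension of X/R, i.e. the least
number of vectors which together with R span X\<close>
definition finite_codim :: "('a::banach \<Rightarrow> 'a) \<Rightarrow> 'a set \<Rightarrow> bool" where
  "finite_codim J R \<longleftrightarrow> (\<exists>B. finite B \<and> cspan J (R \<union> B) = UNIV)"

definition codim :: "('a::banach \<Rightarrow> 'a) \<Rightarrow> 'a set \<Rightarrow> nat" where
  "codim J R = (LEAST n. \<exists>B. finite B \<and> card B = n \<and> cspan J (R \<union> B) = UNIV)"

definition fredholm :: "('a::banach \<Rightarrow> 'a) \<Rightarrow> 'a set \<Rightarrow> ('a \<Rightarrow> 'a) \<Rightarrow> bool" where
  "fredholm J D T \<longleftrightarrow> densely_defined D \<and> closed_op D T \<and>
     cfinite_dim J (null_space D T) \<and> closed (range_op D T) \<and>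
     finite_codim J (range_op D T)"

definition op_index :: "('a::banach \<Rightarrow> 'a) \<Rightarrow> 'a set \<Rightarrow> ('a \<Rightarrow> 'a) \<Rightarrow> int" where
  "op_index J D T = int (cdim J (null_space D T)) - int (codim J (range_op D T))"

definition resolvent_set :: "('a::banach \<Rightarrow> 'a) \<Rightarrow> 'a set \<Rightarrow> ('a \<Rightarrow> 'a) \<Rightarrow> complex set" where
  "resolvent_set J D T = {z. \<exists>R. bounded_linear R \<and>
      (\<forall>y. R y \<in> D \<and> T (R y) - cscale J z (R y) = y) \<and>
      (\<forall>x\<in>D. R (T x - cscale J z x) = x)}"

text \<open>D with the graph norm norm x + norm (T x) is compactly embedded in X:
graph-norm-bounded subsets of D are relatively compact in X\<close>
definition compactly_embedded :: "'a::banach set \<Rightarrow> ('a \<Rightarrow> 'a) \<Rightarrow> bool" where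
  "compactly_embedded D T \<longleftrightarrow>
     (\<forall>M. compact (closure {x \<in> D. norm x + norm (T x) \<le> M}))"

end

theory Submission
  imports Defs
begin

text \<open>Pick z in the resolvent set and let K = z B. Then A B - K = (A - z) B is injective, but
  not surjective: (A - z) d is missed for any d in D(A) outside the range of B.
  Suppose the null space of A B had real dimension at least the real codimension of its range.
  Hahn--Banach coordinate functionals on a null space basis give a finite-rank F and a closed
  subspace Z of finite codimension on which A B + F is a bijection onto X. Since D(A B) embeds
  compactly, (K + F) composed with the inverse of A B + F is compact, and the Fredholm
  alternative makes A B - K surjective, a contradiction. Hence the real nullity is smaller than
  the real deficiency; as these are at least twice the complex nullity and at most twice the
  complex codimension, the index is negative.\<close>

text \<open>Partial functionals are encoded by their graphs, so that Zorn's lemma applies to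
  inclusion of graphs.\<close>
definition dominated_extension ::
    "'a::real_normed_vector set \<Rightarrow> ('a \<Rightarrow> real) \<Rightarrow> real \<Rightarrow> ('a \<times> real) set \<Rightarrow> bool" where
  "dominated_extension V g C H \<longleftrightarrow>
     (\<forall>x a b. (x,a)\<in>H \<longrightarrow> (x,b)\<in>H \<longrightarrow> a = b) \<and> (\<forall>x\<in>V. (x, g x) \<in> H) \<and>
     (\<forall>x a y b. (x,a)\<in>H \<longrightarrow> (y,b)\<in>H \<longrightarrow> (x+y, a+b) \<in> H) \<and>
     (\<forall>x a c. (x,a)\<in>H \<longrightarrow> (c *\<^sub>R x, c*a) \<in> H) \<and> (\<forall>x a. (x,a)\<in>H \<longrightarrow> a \<le> C * norm x)"

lemma dominated_extensionD:
  assumes "dominated_extension V g C H"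
  shows dominated_extension_functional: "\<And>x a b. (x,a)\<in>H \<Longrightarrow> (x,b)\<in>H \<Longrightarrow> a = b"
   and dominated_extension_extends: "\<And>x. x\<in>V \<Longrightarrow> (x, g x) \<in> H"
   and dominated_extension_add: "\<And>x a y b. (x,a)\<in>H \<Longrightarrow> (y,b)\<in>H \<Longrightarrow> (x+y, a+b) \<in> H"
   and dominated_extension_scale: "\<And>x a c. (x,a)\<in>H \<Longrightarrow> (c *\<^sub>R x, c*a) \<in> H"
   and dominated_extension_bound: "\<And>x a. (x,a)\<in>H \<Longrightarrow> a \<le> C * norm x"
  using assms unfolding dominated_extension_def by blast+

lemma dominated_extensionI:
  assumes "\<And>x a b. (x,a)\<in>H \<Longrightarrow> (x,b)\<in>H \<Longrightarrow> a = b"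
   and "\<And>x. x\<in>V \<Longrightarrow> (x, g x) \<in> H"
   and "\<And>x a y b. (x,a)\<in>H \<Longrightarrow> (y,b)\<in>H \<Longrightarrow> (x+y, a+b) \<in> H"
   and "\<And>x a c. (x,a)\<in>H \<Longrightarrow> (c *\<^sub>R x, c*a) \<in> H"
   and "\<And>x a. (x,a)\<in>H \<Longrightarrow> a \<le> C * norm x"
  shows "dominated_extension V g C H"
  using assms unfolding dominated_extension_def by blast

lemma dominated_extension_zero:
  assumes "dominated_extension V g C M" and "0 \<in> V"
  shows "(0, 0) \<in> M"
  using dominated_extension_scale[OF assms(1) dominated_extension_extends[OF assms], of 0] by simp

lemma dominated_extension_diff:
  assumes "dominated_extension V g C M" and "(w,a) \<in> M" "(w',a') \<in> M"
  shows "(w' - w, a' - a) \<in> M"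
  using dominated_extension_add[OF assms(1) assms(3) dominated_extension_scale[OF assms(1,2), of "-1"]]
  by simp

text \<open>The value c assigned to a new vector x0 must satisfy these two inequalities; they are
  compatible by the triangle inequality, so the supremum of the left-hand sides works.\<close>
lemma dominated_extension_step_value:
  assumes M: "dominated_extension V g C M" and C: "C \<ge> 0" and V0: "0 \<in> V"
  obtains c where "\<And>w a. (w,a) \<in> M \<Longrightarrow> a - C * norm (w - x0) \<le> c"
    and "\<And>w a. (w,a) \<in> M \<Longrightarrow> c \<le> C * norm (w + x0) - a"
proof -
  define S where "S = {a - C * norm (w - x0) | w a. (w,a) \<in> M}"
  have key: "s \<le> C * norm (w' + x0) - a'" if "s \<in> S" and m2: "(w',a') \<in> M" for s w' a'
  proof -
    obtain w a where wa: "(w,a) \<in> M" "s = a - C * norm (w - x0)" using \<open>s \<in> S\<close> unfolding S_def by blast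
    have "a + a' \<le> C * norm (w + w')"
      using dominated_extension_bound[OF M dominated_extension_add[OF M wa(1) m2]] .
    also have "\<dots> \<le> C * (norm (w - x0) + norm (w' + x0))"
      using norm_triangle_ineq[of "w - x0" "w' + x0"] C by (simp add: mult_left_mono)
    finally show ?thesis using wa(2) by (simp add: algebra_simps)
  qed
  have zero: "(0, 0) \<in> M" using dominated_extension_zero[OF M V0] .
  have "bdd_above S" by (rule bdd_aboveI[where M="C * norm (0 + x0) - 0"]) (rule key[OF _ zero])
  moreover have "S \<noteq> {}" using zero unfolding S_def by blast
  ultimately show ?thesis
  proof (intro that[of "Sup S"])
    show "a - C * norm (w - x0) \<le> Sup S" if "(w,a) \<in> M" for w a
      using that \<open>bdd_above S\<close> unfolding S_def by (intro cSup_upper) auto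
    show "Sup S \<le> C * norm (w + x0) - a" if "(w,a) \<in> M" for w a
      using that \<open>S \<noteq> {}\<close> key by (intro cSup_least) auto
  qed
qed

lemma dominated_extension_bound_on_line:
  assumes M: "dominated_extension V g C M" and wa: "(w,a) \<in> M"
    and lo: "\<And>w a. (w,a) \<in> M \<Longrightarrow> a - C * norm (w - x0) \<le> c"
    and hi: "\<And>w a. (w,a) \<in> M \<Longrightarrow> c \<le> C * norm (w + x0) - a"
  shows "a + t * c \<le> C * norm (w + t *\<^sub>R x0)"
proof (cases t "0::real" rule: linorder_cases)
  case equal then show ?thesis using dominated_extension_bound[OF M wa] by simp
next
  case greater
  define N where "N = norm ((1/t) *\<^sub>R w + x0)"
  have n: "norm (w + t *\<^sub>R x0) = t * N"
  proof -
    have "w + t *\<^sub>R x0 = t *\<^sub>R ((1/t) *\<^sub>R w + x0)" using greater by (simp add: algebra_simps)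
    then show ?thesis using greater by (simp add: N_def)
  qed
  have "c \<le> C * N - (1/t) * a"
    unfolding N_def using hi dominated_extension_scale[OF M wa] by blast
  then have "t * c \<le> t * (C * N - (1/t) * a)" using greater by (simp add: mult_left_mono)
  also have "\<dots> = C * (t * N) - a" using greater by (simp add: field_simps)
  finally show ?thesis using n by simp
next
  case less
  define N where "N = norm ((1/(-t)) *\<^sub>R w - x0)"
  have n: "norm (w + t *\<^sub>R x0) = - t * N"
  proof -
    have "w + t *\<^sub>R x0 = (- t) *\<^sub>R ((1/(-t)) *\<^sub>R w - x0)" using less by (simp add: algebra_simps)
    then show ?thesis using less by (simp add: N_def)
  qed
  have "(1/(-t)) * a - C * N \<le> c"
    unfolding N_def using lo dominated_extension_scale[OF M wa] by blast
  then have "- t * ((1/(-t)) * a - C * N) \<le> - t * c" using less by (simp add: mult_left_mono)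
  moreover have "- t * ((1/(-t)) * a - C * N) = a - C * (- t * N)" using less by (simp add: field_simps)
  ultimately show ?thesis using n by simp
qed

lemma dominated_extension_line_unique:
  assumes M: "dominated_extension V g C M" and x0: "\<forall>a. (x0, a) \<notin> M"
    and m: "(w1,a1) \<in> M" "(w2,a2) \<in> M" and eq: "w1 + t1 *\<^sub>R x0 = w2 + t2 *\<^sub>R x0"
  shows "t1 = t2"
proof (rule ccontr)
  assume ne: "t1 \<noteq> t2"
  have "w2 - w1 = (t1 - t2) *\<^sub>R x0" using eq by (simp add: algebra_simps)
  then have "(1 / (t1 - t2)) *\<^sub>R (w2 - w1) = x0" using ne by simp
  moreover have "((1 / (t1 - t2)) *\<^sub>R (w2 - w1), (1 / (t1 - t2)) * (a2 - a1)) \<in> M"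
    using dominated_extension_scale[OF M] dominated_extension_diff[OF M m] by blast
  ultimately show False using x0 by metis
qed

lemma dominated_extension_step:
  assumes M: "dominated_extension V g C M" and C: "C \<ge> 0" and V0: "0 \<in> V"
    and x0: "\<forall>a. (x0, a) \<notin> M"
  obtains H c where "dominated_extension V g C H" "M \<subseteq> H" "(x0, c) \<in> H"
proof -
  obtain c where lo: "\<And>w a. (w,a) \<in> M \<Longrightarrow> a - C * norm (w - x0) \<le> c"
    and hi: "\<And>w a. (w,a) \<in> M \<Longrightarrow> c \<le> C * norm (w + x0) - a"
    using dominated_extension_step_value[OF M C V0] by blast
  define H where "H = {(w + t *\<^sub>R x0, a + t * c) | w a t. (w,a) \<in> M}"
  note add = dominated_extension_add[OF M] and sc = dominated_extension_scale[OF M]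
  have "dominated_extension V g C H"
  proof (rule dominated_extensionI)
    fix x a b assume "(x, a) \<in> H" "(x, b) \<in> H"
    then obtain w1 a1 t1 w2 a2 t2 where
      m: "(w1,a1)\<in>M" "(w2,a2)\<in>M" and e: "x = w1 + t1 *\<^sub>R x0" "a = a1 + t1 * c"
        "x = w2 + t2 *\<^sub>R x0" "b = a2 + t2 * c"
      unfolding H_def by blast
    have "t1 = t2"
      using dominated_extension_line_unique[OF M x0 m] e(1,3) by simp
    then show "a = b" using e m dominated_extension_functional[OF M] by auto
  next
    fix x assume "x \<in> V"
    then show "(x, g x) \<in> H" unfolding H_def using dominated_extension_extends[OF M] by force
  next
    fix x a y b assume "(x, a) \<in> H" "(y, b) \<in> H"
    then obtain w1 a1 t1 w2 a2 t2 where
      m: "(w1,a1)\<in>M" "(w2,a2)\<in>M" and e: "x = w1 + t1 *\<^sub>R x0" "a = a1 + t1 * c"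
        "y = w2 + t2 *\<^sub>R x0" "b = a2 + t2 * c"
      unfolding H_def by blast
    have "x + y = (w1 + w2) + (t1 + t2) *\<^sub>R x0" "a + b = (a1 + a2) + (t1 + t2) * c"
      using e by (simp_all add: algebra_simps)
    then show "(x + y, a + b) \<in> H" unfolding H_def using add[OF m] by blast
  next
    fix x a s assume "(x, a) \<in> H"
    then obtain w1 a1 t1 where m: "(w1,a1)\<in>M" and e: "x = w1 + t1 *\<^sub>R x0" "a = a1 + t1 * c"
      unfolding H_def by blast
    have "s *\<^sub>R x = s *\<^sub>R w1 + (s * t1) *\<^sub>R x0" "s * a = s * a1 + (s * t1) * c"
      using e by (simp_all add: algebra_simps)
    then show "(s *\<^sub>R x, s * a) \<in> H" unfolding H_def using sc[OF m] by blast
  next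
    fix x a assume "(x, a) \<in> H"
    then show "a \<le> C * norm x"
      unfolding H_def using dominated_extension_bound_on_line[OF M _ lo hi] by blast
  qed
  moreover have "M \<subseteq> H"
  proof (rule subrelI)
    fix w a assume "(w, a) \<in> M"
    moreover have "(w, a) = (w + 0 *\<^sub>R x0, a + 0 * c)" by simp
    ultimately show "(w, a) \<in> H" unfolding H_def by blast
  qed
  moreover have "(x0, c) \<in> H"
  proof -
    have "(x0, c) = (0 + 1 *\<^sub>R x0, 0 + 1 * c)" by simp
    then show ?thesis using dominated_extension_zero[OF M V0] unfolding H_def by blast
  qed
  ultimately show ?thesis by (rule that)
qed
lemma dominated_extension_Union_chain:
  assumes ch: "Ch \<in> chains {H. dominated_extension V g C H}" and H0: "dominated_extension V g C H0"
    and sub: "\<And>H. H \<in> Ch \<Longrightarrow> H0 \<subseteq> H"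
  shows "dominated_extension V g C (\<Union>(insert H0 Ch))"
proof -
  have ok: "dominated_extension V g C H" if "H \<in> insert H0 Ch" for H
    using that ch H0 unfolding chains_def by auto
  have "chain\<^sub>\<subseteq> (insert H0 Ch)"
    using ch sub unfolding chains_def chain_subset_def by blast
  then have two: "\<exists>H\<in>insert H0 Ch. p \<in> H \<and> q \<in> H"
    if "p \<in> \<Union>(insert H0 Ch)" "q \<in> \<Union>(insert H0 Ch)" for p q
  proof -
    from that obtain X Y where XY: "X \<in> insert H0 Ch" "p \<in> X" "Y \<in> insert H0 Ch" "q \<in> Y"
      by blast
    with \<open>chain\<^sub>\<subseteq> (insert H0 Ch)\<close> have "X \<subseteq> Y \<or> Y \<subseteq> X"
      unfolding chain_subset_def by blast
    with XY show ?thesis by blast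
  qed
  show ?thesis
  proof (rule dominated_extensionI)
    fix x a b assume "(x,a) \<in> \<Union>(insert H0 Ch)" "(x,b) \<in> \<Union>(insert H0 Ch)"
    then obtain H where "H \<in> insert H0 Ch" "(x,a) \<in> H" "(x,b) \<in> H" using two by blast
    then show "a = b" using dominated_extension_functional[OF ok] by blast
  next
    fix x assume "x \<in> V" then show "(x, g x) \<in> \<Union>(insert H0 Ch)"
      using dominated_extension_extends[OF H0] by blast
  next
    fix x a y b assume "(x,a) \<in> \<Union>(insert H0 Ch)" "(y,b) \<in> \<Union>(insert H0 Ch)"
    then obtain H where H: "H \<in> insert H0 Ch" "(x,a) \<in> H" "(y,b) \<in> H" using two by blast
    then have "(x+y, a+b) \<in> H" using dominated_extension_add[OF ok] by blast
    then show "(x+y, a+b) \<in> \<Union>(insert H0 Ch)" using H(1) by blast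
  next
    fix x a c assume "(x,a) \<in> \<Union>(insert H0 Ch)"
    then obtain H where H: "H \<in> insert H0 Ch" "(x,a) \<in> H" by blast
    then have "(c *\<^sub>R x, c*a) \<in> H" using dominated_extension_scale[OF ok] by blast
    then show "(c *\<^sub>R x, c*a) \<in> \<Union>(insert H0 Ch)" using H(1) by blast
  next
    fix x a assume "(x,a) \<in> \<Union>(insert H0 Ch)"
    then obtain H where "H \<in> insert H0 Ch" "(x,a) \<in> H" by blast
    then show "a \<le> C * norm x" using dominated_extension_bound[OF ok] by blast
  qed
qed

lemma total_dominated_extension_functional:
  assumes M: "dominated_extension V g C M" and tot: "\<And>x. \<exists>a. (x, a) \<in> M"
  shows "\<exists>f. bounded_linear f \<and> (\<forall>x\<in>V. f x = g x) \<and> (\<forall>x. \<bar>f x\<bar> \<le> C * norm x)"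
proof -
  define f where "f x = (THE a. (x, a) \<in> M)" for x
  have fM: "(x, f x) \<in> M" for x
    unfolding f_def using tot[of x] dominated_extension_functional[OF M] by (metis theI)
  have feq: "f x = a" if "(x, a) \<in> M" for x a
    using dominated_extension_functional[OF M] fM that by blast
  have fadd: "f (x + y) = f x + f y" for x y using feq dominated_extension_add[OF M] fM by blast
  have fsc: "f (r *\<^sub>R x) = r * f x" for r x using feq dominated_extension_scale[OF M] fM by blast
  have fb: "\<bar>f x\<bar> \<le> C * norm x" for x
    using dominated_extension_bound[OF M fM, of x] dominated_extension_bound[OF M fM, of "-x"]
      fsc[of "-1" x] by simp
  have "bounded_linear f"
    by (rule bounded_linear_intro[where K=C]) (auto simp: fadd fsc fb mult.commute)
  then show ?thesis using fb feq dominated_extension_extends[OF M] by blast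
qed

theorem hahn_banach:
  fixes g :: "'a::real_normed_vector \<Rightarrow> real"
  assumes V: "subspace V" and gadd: "\<And>x y. x\<in>V \<Longrightarrow> y\<in>V \<Longrightarrow> g (x+y) = g x + g y"
    and gsc: "\<And>c x. x\<in>V \<Longrightarrow> g (c *\<^sub>R x) = c * g x" and gbd: "\<And>x. x\<in>V \<Longrightarrow> g x \<le> C * norm x"
    and C: "C \<ge> 0"
  shows "\<exists>f. bounded_linear f \<and> (\<forall>x\<in>V. f x = g x) \<and> (\<forall>x. \<bar>f x\<bar> \<le> C * norm x)"
proof -
  define H0 where "H0 = {(x, g x) | x. x \<in> V}"
  have V0: "0 \<in> V" using V by (rule subspace_0)
  have H0: "dominated_extension V g C H0"
  proof (rule dominated_extensionI)
    show "(x+y, a+b) \<in> H0" if "(x,a)\<in>H0" "(y,b)\<in>H0" for x a y b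
      using that gadd V by (auto simp: H0_def subspace_add)
    show "(c *\<^sub>R x, c*a) \<in> H0" if "(x,a)\<in>H0" for x a c
      using that gsc V by (auto simp: H0_def subspace_scale)
  qed (use gbd in \<open>auto simp: H0_def\<close>)
  define A where "A = {H. dominated_extension V g C H}"
  have "\<exists>M\<in>A. \<forall>X\<in>A. M \<subseteq> X \<longrightarrow> X = M"
  proof (rule Zorn_Lemma2, intro ballI)
    fix Ch assume Ch: "Ch \<in> chains A"
    have "H0 \<subseteq> H" if "H \<in> Ch" for H
    proof
      fix p assume "p \<in> H0"
      then obtain x where "x \<in> V" "p = (x, g x)" by (auto simp: H0_def)
      moreover have "dominated_extension V g C H" using that Ch by (auto simp: chains_def A_def)
      ultimately show "p \<in> H" using dominated_extension_extends by blast
    qed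
    then have "dominated_extension V g C (\<Union>(insert H0 Ch))"
      using dominated_extension_Union_chain[OF Ch[unfolded A_def] H0] by blast
    moreover have "\<forall>X\<in>Ch. X \<subseteq> \<Union>(insert H0 Ch)" by blast
    ultimately show "\<exists>U\<in>A. \<forall>X\<in>Ch. X \<subseteq> U" unfolding A_def by blast
  qed
  then obtain M where M: "dominated_extension V g C M"
    and max: "\<And>X. dominated_extension V g C X \<Longrightarrow> M \<subseteq> X \<Longrightarrow> X = M"
    unfolding A_def by blast
  have "\<exists>a. (x, a) \<in> M" for x
  proof (rule ccontr)
    assume none: "\<not> (\<exists>a. (x, a) \<in> M)"
    obtain H c where "dominated_extension V g C H" "M \<subseteq> H" "(x, c) \<in> H"
      using dominated_extension_step[OF M C V0] none by blast
    then show False using max none by blast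
  qed
  with M show ?thesis by (rule total_dominated_extension_functional)
qed
lemma abs_scaleR_infdist_le_norm:
  fixes e :: "'a::real_normed_vector"
  assumes M: "subspace M" and m: "m \<in> M"
  shows "\<bar>k\<bar> * infdist e M \<le> norm (k *\<^sub>R e + m)"
proof (cases "k = 0")
  case True then show ?thesis by simp
next
  case False
  have mem: "- ((1/k) *\<^sub>R m) \<in> M" using M m by (simp add: subspace_neg subspace_scale)
  have "infdist e M \<le> dist e (- ((1/k) *\<^sub>R m))" by (rule infdist_le[OF mem])
  also have "\<dots> = norm (e + (1/k) *\<^sub>R m)" by (simp add: dist_norm)
  finally have "\<bar>k\<bar> * infdist e M \<le> \<bar>k\<bar> * norm (e + (1/k) *\<^sub>R m)"
    by (simp add: mult_left_mono)
  also have "\<bar>k\<bar> * norm (e + (1/k) *\<^sub>R m) = norm (k *\<^sub>R (e + (1/k) *\<^sub>R m))" by simp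
  also have "k *\<^sub>R (e + (1/k) *\<^sub>R m) = k *\<^sub>R e + m" using False by (simp add: algebra_simps)
  finally show ?thesis .
qed

lemma Cauchy_coefficients_modulo_subspace:
  fixes e :: "'a::real_normed_vector"
  assumes M: "subspace M" and d: "infdist e M > 0"
    and x: "Cauchy x" and k: "\<And>n. x n - k n *\<^sub>R e \<in> M"
  shows "Cauchy k"
proof (rule metric_CauchyI)
  fix r :: real assume "r > 0"
  then obtain N where N: "\<And>m n. m \<ge> N \<Longrightarrow> n \<ge> N \<Longrightarrow> dist (x m) (x n) < r * infdist e M"
    using metric_CauchyD[OF x, of "r * infdist e M"] d by auto
  have "\<bar>k m - k n\<bar> * infdist e M \<le> norm (x m - x n)" for m n
  proof -
    have "(x m - k m *\<^sub>R e) - (x n - k n *\<^sub>R e) \<in> M" using k M by (simp add: subspace_diff)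
    from abs_scaleR_infdist_le_norm[OF M this, of "k m - k n" e] show ?thesis
      by (simp add: algebra_simps)
  qed
  then have "\<bar>k m - k n\<bar> * infdist e M < r * infdist e M" if "m \<ge> N" "n \<ge> N" for m n
    using N[OF that] by (smt (verit) dist_norm)
  then show "\<exists>N. \<forall>m\<ge>N. \<forall>n\<ge>N. dist (k m) (k n) < r"
    using d by (auto simp: dist_real_def)
qed

lemma closed_span_insert:
  fixes e :: "'a::banach"
  assumes cl: "closed (span E)"
  shows "closed (span (insert e E))"
proof (cases "e \<in> span E")
  case True
  then show ?thesis using cl by (simp add: span_redundant)
next
  case False
  have d: "infdist e (span E) > 0"
    using cl False span_0[of E] by (intro infdist_pos_not_in_closed) auto
  show ?thesis
    unfolding closed_sequential_limits
  proof (intro allI impI, elim conjE)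
    fix x l assume x: "\<forall>n. x n \<in> span (insert e E)" and lim: "x \<longlonglongrightarrow> l"
    have "\<forall>n. \<exists>c. x n - c *\<^sub>R e \<in> span E" using x by (simp add: span_insert)
    then obtain k where k: "\<And>n. x n - k n *\<^sub>R e \<in> span E" by (auto dest!: choice)
    have "Cauchy k"
      using subspace_span d LIMSEQ_imp_Cauchy[OF lim] k by (rule Cauchy_coefficients_modulo_subspace)
    then obtain k0 where k0: "k \<longlonglongrightarrow> k0" using Cauchy_convergent_iff convergent_def by blast
    have "(\<lambda>n. x n - k n *\<^sub>R e) \<longlonglongrightarrow> l - k0 *\<^sub>R e" using lim k0 by (intro tendsto_intros)
    then have "l - k0 *\<^sub>R e \<in> span E" by (rule closed_sequentially[OF cl k])
    then show "l \<in> span (insert e E)" by (auto simp: span_insert)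
  qed
qed

lemma closed_span_finite:
  fixes E :: "'a::banach set"
  assumes "finite E"
  shows "closed (span E)"
  using assms
proof (induction E rule: finite_induct)
  case empty then show ?case by simp
next
  case (insert e E)
  from closed_span_insert[OF insert(3)] show ?case .
qed

lemma coefficient_along_vector:
  assumes M: "subspace M" and b: "b \<notin> M"
  obtains g :: "'a::real_vector \<Rightarrow> real" where "\<forall>x k. x - k *\<^sub>R b \<in> M \<longrightarrow> g x = k"
proof -
  have uniq: "k = k'" if "x - k *\<^sub>R b \<in> M" "x - k' *\<^sub>R b \<in> M" for x k k'
  proof (rule ccontr)
    assume ne: "k \<noteq> k'"
    have "(x - k *\<^sub>R b) - (x - k' *\<^sub>R b) \<in> M" by (rule subspace_diff[OF M that])
    then have "(k' - k) *\<^sub>R b \<in> M" by (simp add: algebra_simps)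
    then have "(1 / (k' - k)) *\<^sub>R ((k' - k) *\<^sub>R b) \<in> M" by (rule subspace_scale[OF M])
    then show False using ne b by simp
  qed
  have "(THE k. x - k *\<^sub>R b \<in> M) = k" if "x - k *\<^sub>R b \<in> M" for x k
    by (rule the_equality) (use that uniq in blast)+
  then show ?thesis by (intro that[of "\<lambda>x. THE k. x - k *\<^sub>R b \<in> M"]) blast
qed

lemma separating_functional:
  fixes b :: "'a::real_normed_vector"
  assumes M: "subspace M" and cl: "closed M" and b: "b \<notin> M"
  obtains f :: "'a \<Rightarrow> real" where "bounded_linear f" "f b = 1" "\<And>m. m \<in> M \<Longrightarrow> f m = 0"
proof -
  define d where "d = infdist b M"
  have d: "d > 0"
    unfolding d_def using cl subspace_0[OF M] b by (intro infdist_pos_not_in_closed) auto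
  obtain g :: "'a \<Rightarrow> real" where g: "\<forall>x k. x - k *\<^sub>R b \<in> M \<longrightarrow> g x = k"
    by (rule coefficient_along_vector[OF M b])
  note gI = g[rule_format]
  define V where "V = span (insert b M)"
  have V: "x \<in> V \<longleftrightarrow> (\<exists>k. x - k *\<^sub>R b \<in> M)" for x
    using M by (simp add: V_def span_insert span_eq_iff[THEN iffD2])
  have gV: "x - g x *\<^sub>R b \<in> M" if x: "x \<in> V" for x
  proof -
    obtain k where k: "x - k *\<^sub>R b \<in> M" using V[of x] x by blast
    then show ?thesis using gI[OF k] by simp
  qed
  have gadd: "g (x + y) = g x + g y" if "x \<in> V" "y \<in> V" for x y
  proof -
    have "(x - g x *\<^sub>R b) + (y - g y *\<^sub>R b) \<in> M" using gV that M by (simp add: subspace_add)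
    then have "x + y - (g x + g y) *\<^sub>R b \<in> M" by (simp add: algebra_simps)
    then show ?thesis by (rule gI)
  qed
  have gsc: "g (c *\<^sub>R x) = c * g x" if "x \<in> V" for c x
  proof -
    have "c *\<^sub>R (x - g x *\<^sub>R b) \<in> M" using gV that M by (simp add: subspace_scale)
    then have "c *\<^sub>R x - (c * g x) *\<^sub>R b \<in> M" by (simp add: algebra_simps)
    then show ?thesis by (rule gI)
  qed
  have gbd: "g x \<le> (1/d) * norm x" if "x \<in> V" for x
  proof -
    have "\<bar>g x\<bar> * d \<le> norm (g x *\<^sub>R b + (x - g x *\<^sub>R b))"
      unfolding d_def by (rule abs_scaleR_infdist_le_norm[OF M gV[OF that]])
    then have "\<bar>g x\<bar> \<le> norm x / d" using d by (simp add: field_simps)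
    then show ?thesis by simp
  qed
  obtain f where f: "bounded_linear f" "\<And>x. x \<in> V \<Longrightarrow> f x = g x"
    using hahn_banach[OF subspace_span[of "insert b M", folded V_def] gadd gsc gbd] d by auto
  have b1: "b - 1 *\<^sub>R b \<in> M" using subspace_0[OF M] by simp
  have m0: "m - 0 *\<^sub>R b \<in> M" if "m \<in> M" for m using that by simp
  show ?thesis
  proof (rule that[OF f(1)])
    have "b \<in> V" using V[of b] b1 by blast
    then show "f b = 1" using f(2) gI[OF b1] by simp
    fix m assume "m \<in> M"
    then have "m \<in> V" using V[of m] m0 by blast
    then show "f m = 0" using f(2) gI[OF m0[OF \<open>m \<in> M\<close>]] by simp
  qed
qed

lemma coordinate_functionals:
  fixes N :: "'a::banach set"
  assumes "finite N" "independent N"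
  obtains \<phi> :: "'a \<Rightarrow> 'a \<Rightarrow> real"
  where "\<forall>b\<in>N. bounded_linear (\<phi> b)"
    and "\<forall>b\<in>N. \<forall>b'\<in>N. \<phi> b b' = (if b' = b then 1 else 0)"
proof -
  have "\<exists>f::'a\<Rightarrow>real. bounded_linear f \<and> f b = 1 \<and> (\<forall>m\<in>span (N - {b}). f m = 0)"
    if b: "b \<in> N" for b
  proof -
    have "b \<notin> span (N - {b})" using assms(2) b by (simp add: dependent_def)
    moreover have "closed (span (N - {b}))" using assms(1) by (simp add: closed_span_finite)
    ultimately show ?thesis by (metis separating_functional subspace_span)
  qed
  then obtain \<phi> :: "'a \<Rightarrow> 'a \<Rightarrow> real" where
    \<phi>: "\<And>b. b \<in> N \<Longrightarrow> bounded_linear (\<phi> b) \<and> \<phi> b b = 1 \<and> (\<forall>m\<in>span (N - {b}). \<phi> b m = 0)"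
    by metis
  show ?thesis
  proof (rule that)
    show "\<forall>b\<in>N. bounded_linear (\<phi> b)" using \<phi> by blast
    show "\<forall>b\<in>N. \<forall>b'\<in>N. \<phi> b b' = (if b' = b then 1 else 0)"
      using \<phi> span_base[of _ "N - {_}"] by fastforce
  qed
qed
lemma infdist_lessE:
  fixes A :: "'a::metric_space set"
  assumes "A \<noteq> {}" "infdist x A < e"
  obtains a where "a \<in> A" "dist x a < e"
proof -
  have "(INF a\<in>A. dist x a) < e" using assms by (simp add: infdist_def)
  then show ?thesis
    using assms(1) that by (subst (asm) cINF_less_iff) (auto intro: bdd_belowI[where m=0])
qed

lemma riesz_lemma:
  fixes W W' :: "'a::real_normed_vector set"
  assumes "subspace W" "subspace W'" "closed W'" "W' \<subset> W"
  obtains x where "x \<in> W" "norm x = 1" "\<And>w. w \<in> W' \<Longrightarrow> 1/2 \<le> norm (x - w)"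
proof -
  obtain z where z: "z \<in> W" "z \<notin> W'" using assms(4) by blast
  have ne: "W' \<noteq> {}" using assms(2) subspace_0 by blast
  define d where "d = infdist z W'"
  have d: "0 < d" unfolding d_def by (rule infdist_pos_not_in_closed) (use assms z ne in auto)
  obtain w0 where w0: "w0 \<in> W'" "dist z w0 < 2*d"
    using infdist_lessE[OF ne, of z "2*d"] d unfolding d_def by auto
  define r where "r = norm (z - w0)"
  have rpos: "0 < r" unfolding r_def using z w0 by auto
  define x where "x = (1/r) *\<^sub>R (z - w0)"
  have "x \<in> W" unfolding x_def using z w0 assms(1,4)
    by (meson psubsetE subsetD subspace_diff subspace_scale)
  moreover have "norm x = 1" unfolding x_def r_def using rpos r_def by simp
  moreover have "1/2 \<le> norm (x - w)" if w: "w \<in> W'" for w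
  proof -
    have mem: "w0 + r *\<^sub>R w \<in> W'" using w w0 assms(2) by (simp add: subspace_add subspace_scale)
    have "z - (w0 + r *\<^sub>R w) = r *\<^sub>R (x - w)"
      unfolding x_def using rpos by (simp add: algebra_simps)
    then have "dist z (w0 + r *\<^sub>R w) = r * norm (x - w)"
      using rpos by (simp add: dist_norm)
    moreover have "d \<le> dist z (w0 + r *\<^sub>R w)" unfolding d_def by (rule infdist_le[OF mem])
    ultimately have "d \<le> r * norm (x - w)" by simp
    moreover have "r < 2 * d" using w0 unfolding r_def dist_norm by simp
    ultimately have "r * (1/2) < r * norm (x - w)" by linarith
    then show ?thesis using rpos by simp
  qed
  ultimately show ?thesis by (rule that)
qed

lemma not_bounded_below_unit_sequence:
  fixes f :: "'a::real_normed_vector \<Rightarrow> 'b::real_normed_vector"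
  assumes nb: "\<not> (\<exists>C>0. \<forall>x\<in>S. norm x \<le> C * norm (f x))"
    and S: "\<And>c x. x \<in> S \<Longrightarrow> c *\<^sub>R x \<in> S" and f: "\<And>c x. x \<in> S \<Longrightarrow> f (c *\<^sub>R x) = c *\<^sub>R f x"
  shows "\<exists>u. (\<forall>n. u n \<in> S) \<and> (\<forall>n. norm (u n) = 1) \<and> (\<lambda>n. f (u n)) \<longlonglongrightarrow> 0"
proof -
  have "\<exists>y\<in>S. real (Suc n) * norm (f y) < norm y" for n
    using nb of_nat_0_less_iff zero_less_Suc by (metis not_le)
  then obtain y where yS: "\<And>n. y n \<in> S" and yb: "\<And>n. real (Suc n) * norm (f (y n)) < norm (y n)"
    by metis
  have ynz: "norm (y n) > 0" for n
    using yb[of n] by (smt (verit) mult_nonneg_nonneg norm_ge_zero of_nat_0_le_iff)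
  define u where "u n = (1 / norm (y n)) *\<^sub>R y n" for n
  have small: "norm (f (u n)) \<le> 1 / real (Suc n)" for n
  proof -
    have "norm (f (u n)) = norm (f (y n)) / norm (y n)"
      using ynz[of n] by (simp add: u_def f[OF yS])
    also have "\<dots> \<le> 1 / real (Suc n)"
      using yb[of n] ynz[of n] by (simp add: divide_simps mult.commute)
    finally show ?thesis .
  qed
  have "(\<lambda>n. f (u n)) \<longlonglongrightarrow> 0"
  proof (rule tendsto_norm_zero_cancel,
      rule tendsto_sandwich[where f="\<lambda>_. 0" and h="\<lambda>n. 1 / real (Suc n)"])
    show "\<forall>\<^sub>F n in sequentially. norm (f (u n)) \<le> 1 / real (Suc n)"
      using small by (intro always_eventually) blast
    show "(\<lambda>n. 1 / real (Suc n)) \<longlonglongrightarrow> 0"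
      using LIMSEQ_inverse_real_of_nat by (simp add: inverse_eq_divide)
  qed auto
  moreover have "u n \<in> S" "norm (u n) = 1" for n using yS ynz[of n] by (simp_all add: u_def S)
  ultimately show ?thesis by blast
qed

definition compact_linear_map :: "('a::real_normed_vector \<Rightarrow> 'b::real_normed_vector) \<Rightarrow> bool" where
  "compact_linear_map G \<longleftrightarrow> bounded_linear G \<and>
     (\<forall>x::nat \<Rightarrow> 'a. (\<forall>n. norm (x n) \<le> 1) \<longrightarrow> (\<exists>l r. strict_mono r \<and> ((G \<circ> x \<circ> r) \<longlonglongrightarrow> l)))"

lemma compact_linear_map_bounded_below:
  fixes G :: "'a::banach \<Rightarrow> 'a"
  assumes G: "compact_linear_map G" and inj: "inj (\<lambda>x. x - G x)"
  obtains c where "c > 0" "\<And>x. norm x \<le> c * norm (x - G x)"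
proof (rule ccontr)
  assume "\<not> thesis"
  then have nb: "\<not> (\<exists>c>0. \<forall>x\<in>UNIV. norm x \<le> c * norm (x - G x))" using that by blast
  have bl: "bounded_linear G" using G by (simp add: compact_linear_map_def)
  have "\<exists>u. (\<forall>n. u n \<in> UNIV) \<and> (\<forall>n. norm (u n) = 1) \<and> (\<lambda>n. u n - G (u n)) \<longlonglongrightarrow> 0"
    by (rule not_bounded_below_unit_sequence[where f="\<lambda>x. x - G x", OF nb])
      (use bl in \<open>auto simp: linear_simps algebra_simps\<close>)
  then obtain u where un: "\<And>n. norm (u n) = 1" and z: "(\<lambda>n. u n - G (u n)) \<longlonglongrightarrow> 0"
    by blast
  obtain l r where r: "strict_mono r" and lim: "(\<lambda>n. G (u (r n))) \<longlonglongrightarrow> l"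
    using G un unfolding compact_linear_map_def o_def by (metis order_refl)
  have "(\<lambda>n. (u (r n) - G (u (r n))) + G (u (r n))) \<longlonglongrightarrow> 0 + l"
    using LIMSEQ_subseq_LIMSEQ[OF z r] lim by (intro tendsto_add) (auto simp: o_def)
  then have ul: "(\<lambda>n. u (r n)) \<longlonglongrightarrow> l" by simp
  then have "norm l = 1" using un tendsto_norm[OF ul] by (simp add: LIMSEQ_const_iff)
  moreover have "G l = l"
    using bounded_linear.tendsto[OF bl ul] lim by (rule LIMSEQ_unique)
  then have "l = 0" using injD[OF inj, of l 0] bl by (simp add: linear_simps)
  ultimately show False by simp
qed

lemma closed_image_bounded_below:
  fixes G :: "'a::banach \<Rightarrow> 'a"
  assumes bl: "bounded_linear G"
   and c: "c > 0" and lb: "\<And>x. norm x \<le> c * norm (x - G x)"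
   and W: "closed W"
  shows "closed ((\<lambda>x. x - G x) ` W)"
  unfolding closed_sequential_limits
proof (intro allI impI, elim conjE)
  fix y l assume y: "\<forall>n. y n \<in> (\<lambda>x. x - G x) ` W" and lim: "y \<longlonglongrightarrow> l"
  then have "\<forall>n. \<exists>v. v \<in> W \<and> y n = v - G v" by blast
  then obtain w where w: "\<And>n. w n \<in> W" "\<And>n. y n = w n - G (w n)" by (auto dest!: choice)
  have "Cauchy w"
  proof (rule metric_CauchyI)
    fix e :: real assume e: "e > 0"
    obtain M where M: "\<And>m n. m \<ge> M \<Longrightarrow> n \<ge> M \<Longrightarrow> dist (y m) (y n) < e / c"
      using metric_CauchyD[OF LIMSEQ_imp_Cauchy[OF lim], of "e / c"] e c by auto
    show "\<exists>M. \<forall>m\<ge>M. \<forall>n\<ge>M. dist (w m) (w n) < e"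
    proof (intro exI allI impI)
      fix m n assume mn: "m \<ge> M" "n \<ge> M"
      have "dist (w m) (w n) \<le> c * norm ((w m - w n) - G (w m - w n))"
        unfolding dist_norm by (rule lb)
      also have "(w m - w n) - G (w m - w n) = y m - y n"
        using w bl by (simp add: linear_simps)
      also have "c * norm (y m - y n) < c * (e / c)"
        using M[OF mn] c by (simp add: dist_norm pos_less_divide_eq mult.commute)
      finally show "dist (w m) (w n) < e" using c by simp
    qed
  qed
  then obtain w0 where w0: "w \<longlonglongrightarrow> w0" using Cauchy_convergent_iff convergent_def by blast
  have "(\<lambda>n. w n - G (w n)) \<longlonglongrightarrow> w0 - G w0"
    using w0 bounded_linear.tendsto[OF bl w0] by (rule tendsto_diff)
  moreover have "y = (\<lambda>n. w n - G (w n))" using w(2) by (rule ext)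
  ultimately have "l = w0 - G w0" using lim LIMSEQ_unique by auto
  moreover have "w0 \<in> W" by (rule closed_sequentially[OF W w(1) w0])
  ultimately show "l \<in> (\<lambda>x. x - G x) ` W" by blast
qed
lemma compact_linear_map_not_separated:
  fixes x :: "nat \<Rightarrow> 'a::real_normed_vector"
  assumes G: "compact_linear_map G" and x: "\<And>n. norm (x n) \<le> 1"
    and sep: "\<And>k m. k < m \<Longrightarrow> e \<le> dist (G (x k)) (G (x m))" and e: "e > 0"
  shows False
proof -
  obtain l r where r: "strict_mono r" and lim: "(G \<circ> x \<circ> r) \<longlonglongrightarrow> l"
    using G x unfolding compact_linear_map_def by blast
  obtain M where "\<forall>m\<ge>M. \<forall>n\<ge>M. dist ((G \<circ> x \<circ> r) m) ((G \<circ> x \<circ> r) n) < e"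
    using metric_CauchyD[OF LIMSEQ_imp_Cauchy[OF lim] e] by blast
  then have "dist (G (x (r M))) (G (x (r (Suc M)))) < e" by simp
  moreover have "r M < r (Suc M)" using r by (simp add: strict_mono_def)
  ultimately show False using sep by (meson not_le)
qed

lemma injective_image_iterates_psubset:
  assumes "inj f" "\<not> surj f" "W 0 = UNIV" "\<And>k. W (Suc k) = f ` W k"
  shows "W (Suc k) \<subset> W k"
proof (induction k)
  case 0 then show ?case using assms(2-4) by auto
next
  case (Suc k) then show ?case
    using assms(1,4) by (metis image_mono inj_image_eq_iff psubset_eq)
qed

theorem fredholm_alternative:
  fixes G :: "'a::banach \<Rightarrow> 'a"
  assumes G: "compact_linear_map G" and inj: "inj (\<lambda>x. x - G x)"
  shows "surj (\<lambda>x. x - G x)"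
proof (rule ccontr)
  assume ns: "\<not> surj (\<lambda>x. x - G x)"
  define f where "f = (\<lambda>x. x - G x)"
  define W where "W k = range (f ^^ k)" for k
  have bl: "bounded_linear G" using G by (simp add: compact_linear_map_def)
  then have linf: "linear f" unfolding f_def
    by (intro linear_compose_sub linear_id bounded_linear.linear) (auto simp: id_def)
  obtain c where c: "c > 0" "\<And>x. norm x \<le> c * norm (x - G x)"
    using compact_linear_map_bounded_below[OF G inj] by blast
  have WS: "W (Suc k) = f ` W k" for k unfolding W_def by (simp add: image_comp)
  have W0: "W 0 = UNIV" by (simp add: W_def)
  have Wsub: "subspace (W k)" for k
  proof (induction k)
    case (Suc k) show ?case unfolding WS by (rule linear_subspace_image[OF linf Suc])
  qed (simp add: W0)
  have Wcl: "closed (W k)" for k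
  proof (induction k)
    case (Suc k) show ?case unfolding WS f_def by (rule closed_image_bounded_below[OF bl c Suc])
  qed (simp add: W0)
  have Wstrict: "W (Suc k) \<subset> W k" for k
    using inj ns W0 WS unfolding f_def by (rule injective_image_iterates_psubset)
  have Wmono: "W m \<subseteq> W n" if "n \<le> m" for m n
    by (rule lift_Suc_antimono_le[of W]) (use Wstrict that in auto)
  have "\<forall>k. \<exists>x. x \<in> W k \<and> norm x = 1 \<and> (\<forall>w\<in>W (Suc k). 1/2 \<le> norm (x - w))"
  proof
    fix k show "\<exists>x. x \<in> W k \<and> norm x = 1 \<and> (\<forall>w\<in>W (Suc k). 1/2 \<le> norm (x - w))"
      by (rule riesz_lemma[OF Wsub Wsub Wcl Wstrict]) blast
  qed
  then obtain x where xW: "\<And>k. x k \<in> W k" and xn: "\<And>k. norm (x k) = 1"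
    and xd: "\<And>k w. w \<in> W (Suc k) \<Longrightarrow> 1/2 \<le> norm (x k - w)"
    by (auto dest!: choice)
  text \<open>For k < m, the vector G (x k) - G (x m) differs from x k by an element of W (Suc k).\<close>
  have sep: "1/2 \<le> dist (G (x k)) (G (x m))" if "k < m" for k m
  proof -
    have "f (x k) \<in> W (Suc k)" using xW WS by blast
    moreover have "x m \<in> W (Suc k)" using xW Wmono[of "Suc k" m] that by auto
    moreover have "f (x m) \<in> W (Suc k)" using xW WS Wmono[of "Suc k" "Suc m"] that by auto
    ultimately have "f (x k) + x m - f (x m) \<in> W (Suc k)"
      using Wsub[of "Suc k"] by (simp add: subspace_add subspace_diff)
    then have "1/2 \<le> norm (x k - (f (x k) + x m - f (x m)))" by (rule xd)
    then show ?thesis by (simp add: f_def dist_norm)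
  qed
  have "norm (x k) \<le> 1" for k using xn by simp
  with G show False using sep by (rule compact_linear_map_not_separated) simp_all
qed
locale closed_operator_compact_domain =
  fixes D :: "'a::banach set" and T :: "'a \<Rightarrow> 'a"
  assumes subspace_domain: "subspace D"
    and add: "\<And>x y. x \<in> D \<Longrightarrow> y \<in> D \<Longrightarrow> T (x + y) = T x + T y"
    and scale: "\<And>c x. x \<in> D \<Longrightarrow> T (c *\<^sub>R x) = c *\<^sub>R T x"
    and closed_graph: "closed_op D T"
    and compact_domain: "compactly_embedded D T"
begin

lemma zero: "T 0 = 0"
  using scale[of 0 0] subspace_0[OF subspace_domain] by simp

lemma diff:
  assumes x: "x \<in> D" and y: "y \<in> D"
  shows "T (x - y) = T x - T y"
proof -
  have m: "(-1) *\<^sub>R y \<in> D" by (rule subspace_scale[OF subspace_domain y])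
  have "T (x + (-1) *\<^sub>R y) = T x + T ((-1) *\<^sub>R y)" by (rule add[OF x m])
  also have "T ((-1) *\<^sub>R y) = (-1) *\<^sub>R T y" by (rule scale[OF y])
  finally show ?thesis by simp
qed

lemma graph_bounded_subsequence:
  fixes u :: "nat \<Rightarrow> 'a"
  assumes "\<And>n. u n \<in> D" "\<And>n. norm (u n) + norm (T (u n)) \<le> M"
  obtains l r where "strict_mono r" "(\<lambda>n. u (r n)) \<longlonglongrightarrow> l"
proof -
  have sc: "seq_compact (closure {x\<in>D. norm x + norm (T x) \<le> M})"
    using compact_domain unfolding compactly_embedded_def by (blast intro: compact_imp_seq_compact)
  have "u n \<in> {x\<in>D. norm x + norm (T x) \<le> M}" for n using assms by simp
  then have "\<forall>n. u n \<in> closure {x\<in>D. norm x + norm (T x) \<le> M}"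
    using closure_subset by blast
  from seq_compactE[OF sc this] obtain l r where "strict_mono r" "(u \<circ> r) \<longlonglongrightarrow> l" by blast
  then show ?thesis using that by (simp add: o_def)
qed

lemma graph_limit:
  fixes u :: "nat \<Rightarrow> 'a"
  assumes u: "\<And>n. u n \<in> D" and "u \<longlonglongrightarrow> l" and "(\<lambda>n. T (u n)) \<longlonglongrightarrow> v"
  shows "l \<in> D" "T l = v"
proof -
  have tl: "(\<lambda>n. (u n, T (u n))) \<longlonglongrightarrow> (l, v)" using assms(2,3) by (rule tendsto_Pair)
  have mem: "\<And>n. (u n, T (u n)) \<in> {(x, T x) | x. x \<in> D}" using u by blast
  have "closed {(x, T x) | x. x \<in> D}" using closed_graph by (simp add: closed_op_def)
  then have "(l, v) \<in> {(x, T x) | x. x \<in> D}" by (rule closed_sequentially[OF _ mem tl])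
  then show "l \<in> D" "T l = v" by auto
qed

lemma bounded_below:
  assumes inj: "inj_on T D"
  obtains C where "C > 0" "\<And>x. x \<in> D \<Longrightarrow> norm x \<le> C * norm (T x)"
proof (rule ccontr)
  assume "\<not> thesis"
  then have nb: "\<not> (\<exists>C>0. \<forall>x\<in>D. norm x \<le> C * norm (T x))" using that by blast
  obtain u where uD: "\<And>n. u n \<in> D" and un: "\<And>n. norm (u n) = 1"
    and Tu: "(\<lambda>n. T (u n)) \<longlonglongrightarrow> 0"
    using not_bounded_below_unit_sequence[OF nb subspace_scale[OF subspace_domain] scale] by blast
  obtain B where "0 < B" "\<forall>n. norm (T (u n)) \<le> B"
    using convergent_imp_Bseq[OF convergentI[OF Tu]] by (rule BseqE)
  then have bnd: "norm (u n) + norm (T (u n)) \<le> 1 + B" for n using un by simp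
  obtain l r where r: "strict_mono r" and ul: "(\<lambda>n. u (r n)) \<longlonglongrightarrow> l"
    by (rule graph_bounded_subsequence[OF uD bnd])
  have "(\<lambda>n. T (u (r n))) \<longlonglongrightarrow> 0" using LIMSEQ_subseq_LIMSEQ[OF Tu r] by (simp add: o_def)
  then have lD: "l \<in> D" and Tl: "T l = 0" using graph_limit[OF uD ul] by auto
  have "T l = T 0" using Tl zero by simp
  then have "l = 0" by (rule inj_onD[OF inj _ lD subspace_0[OF subspace_domain]])
  moreover have "norm l = 1" using tendsto_norm[OF ul] un by (simp add: LIMSEQ_const_iff)
  ultimately show False by simp
qed

lemma bounded_inverse:
  assumes inj: "inj_on T D" and surj: "T ` D = UNIV"
  obtains Q where "bounded_linear Q" "\<And>y. Q y \<in> D" "\<And>y. T (Q y) = y"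
proof -
  obtain C where C: "C > 0" "\<And>x. x \<in> D \<Longrightarrow> norm x \<le> C * norm (T x)"
    using bounded_below[OF inj] by blast
  define Q where "Q = inv_into D T"
  have y: "y \<in> T ` D" for y using surj by simp
  have QD: "Q y \<in> D" for y unfolding Q_def by (rule inv_into_into[OF y])
  have TQ: "T (Q y) = y" for y unfolding Q_def by (rule f_inv_into_f[OF y])
  have QT: "Q (T x) = x" if "x \<in> D" for x unfolding Q_def using inj that by (rule inv_into_f_f)
  have "Q (x + y) = Q x + Q y" for x y
  proof -
    have "Q x + Q y \<in> D" using subspace_add[OF subspace_domain QD QD] .
    then show ?thesis using QT[of "Q x + Q y"] add[OF QD QD] TQ by simp
  qed
  moreover have "Q (c *\<^sub>R x) = c *\<^sub>R Q x" for c x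
  proof -
    have "c *\<^sub>R Q x \<in> D" using subspace_scale[OF subspace_domain QD] .
    then show ?thesis using QT[of "c *\<^sub>R Q x"] scale[OF QD] TQ by simp
  qed
  moreover have "norm (Q x) \<le> norm x * C" for x using C(2)[OF QD[of x]] TQ by (simp add: mult.commute)
  ultimately have "bounded_linear Q" by (intro bounded_linear_intro[where K=C])
  then show ?thesis using QD TQ by (rule that)
qed

text \<open>The inverse Q maps bounded sets into graph-norm bounded subsets of D, which are
  relatively compact.\<close>
lemma compact_linear_map_comp_inverse:
  assumes Q: "bounded_linear Q" "\<And>y. Q y \<in> D" "\<And>y. T (Q y) = y" and K: "bounded_linear K"
  shows "compact_linear_map (\<lambda>y. K (Q y))"
  unfolding compact_linear_map_def
proof (intro conjI allI impI)
  show "bounded_linear (\<lambda>y. K (Q y))" using K Q(1) by (rule bounded_linear_compose)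
  fix x :: "nat \<Rightarrow> 'a" assume xb: "\<forall>n. norm (x n) \<le> 1"
  obtain C where C: "\<And>y. norm (Q y) \<le> norm y * C" "C > 0"
    using bounded_linear.pos_bounded[OF Q(1)] by blast
  have "norm (Q (x n)) + norm (T (Q (x n))) \<le> C + 1" for n
  proof -
    have "norm (x n) * C \<le> 1 * C" using xb C(2) by (intro mult_right_mono) auto
    then show ?thesis using C(1)[of "x n"] xb Q(3) by (simp add: add_mono)
  qed
  then obtain l r where r: "strict_mono r" and l: "(\<lambda>n. Q (x (r n))) \<longlonglongrightarrow> l"
    by (rule graph_bounded_subsequence[OF Q(2)])
  have "((\<lambda>y. K (Q y)) \<circ> x \<circ> r) \<longlonglongrightarrow> K l"
    using bounded_linear.tendsto[OF K l] by (simp add: o_def)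
  then show "\<exists>l r. strict_mono r \<and> ((\<lambda>y. K (Q y)) \<circ> x \<circ> r) \<longlonglongrightarrow> l" using r by blast
qed

lemma compact_perturbation_surj:
  assumes inj: "inj_on T D" and surj: "T ` D = UNIV"
    and K: "bounded_linear K" and injK: "inj_on (\<lambda>x. T x - K x) D"
  shows "(\<lambda>x. T x - K x) ` D = UNIV"
proof -
  obtain Q where Q: "bounded_linear Q" "\<And>y. Q y \<in> D" "\<And>y. T (Q y) = y"
    using bounded_inverse[OF inj surj] by blast
  have TKQ: "T (Q y) - K (Q y) = y - K (Q y)" for y using Q(3) by simp
  have "inj (\<lambda>y. y - K (Q y))"
  proof (rule injI)
    fix y y' assume "y - K (Q y) = y' - K (Q y')"
    then have "T (Q y) - K (Q y) = T (Q y') - K (Q y')" by (simp only: TKQ)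
    then have "Q y = Q y'" by (rule inj_onD[OF injK _ Q(2) Q(2)])
    then show "y = y'" using Q(3) by metis
  qed
  then have "surj (\<lambda>y. y - K (Q y))"
    by (rule fredholm_alternative[OF compact_linear_map_comp_inverse[OF Q K]])
  have "z \<in> (\<lambda>x. T x - K x) ` D" for z
  proof -
    obtain y where "z = y - K (Q y)" using surjD[OF \<open>surj (\<lambda>y. y - K (Q y))\<close>] by blast
    then have "z = T (Q y) - K (Q y)" by (simp only: TKQ)
    then show ?thesis using Q(2) by (rule image_eqI)
  qed
  then show ?thesis by blast
qed

lemma closed_op_restrict_perturb:
  assumes Z: "closed Z" and F: "bounded_linear F"
  shows "closed_op (D \<inter> Z) (\<lambda>x. T x + F x)"
proof -
  define \<pi> where "\<pi> p = (fst p, snd p - F (fst p))" for p :: "'a \<times> 'a"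
  have "continuous_on UNIV \<pi>"
    unfolding \<pi>_def using F
    by (intro continuous_intros linear_continuous_on bounded_linear_compose[OF F] bounded_linear_fst)
  moreover have "closed {(x, T x) | x. x \<in> D}" using closed_graph by (simp add: closed_op_def)
  ultimately have "closed (\<pi> -` {(x, T x) | x. x \<in> D} \<inter> UNIV)"
    using continuous_on_closed_vimage[OF closed_UNIV] by blast
  then have "closed (\<pi> -` {(x, T x) | x. x \<in> D} \<inter> (Z \<times> UNIV))"
    using Z by (simp add: closed_Int closed_Times)
  moreover have "{(x, T x + F x) | x. x \<in> D \<inter> Z} = \<pi> -` {(x, T x) | x. x \<in> D} \<inter> (Z \<times> UNIV)"
    by (auto simp: \<pi>_def algebra_simps)
  ultimately show ?thesis by (simp add: closed_op_def)
qed

lemma compactly_embedded_restrict_perturb: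
  assumes F: "bounded_linear F"
  shows "compactly_embedded (D \<inter> Z) (\<lambda>x. T x + F x)"
  unfolding compactly_embedded_def
proof
  fix M
  obtain KF where KF: "\<And>x. norm (F x) \<le> norm x * KF" "KF > 0"
    using bounded_linear.pos_bounded[OF F] by blast
  have "{x \<in> D \<inter> Z. norm x + norm (T x + F x) \<le> M} \<subseteq> {x \<in> D. norm x + norm (T x) \<le> M + M * KF}"
  proof (clarify)
    fix x assume x: "x \<in> D" "norm x + norm (T x + F x) \<le> M"
    have "norm (T x) \<le> norm (T x + F x) + norm (F x)" by (metis add_diff_cancel norm_triangle_ineq4)
    moreover have "norm x * KF \<le> M * KF"
      using x(2) KF(2) by (intro mult_right_mono) (auto intro: order_trans[OF _ x(2)])
    ultimately show "norm x + norm (T x) \<le> M + M * KF" using x(2) KF(1)[of x] by linarith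
  qed
  then have sub: "closure {x \<in> D \<inter> Z. norm x + norm (T x + F x) \<le> M}
      \<subseteq> closure {x \<in> D. norm x + norm (T x) \<le> M + M * KF}"
    by (rule closure_mono)
  have "compact (closure {x \<in> D. norm x + norm (T x) \<le> M + M * KF})"
    using compact_domain by (simp add: compactly_embedded_def)
  then have "compact (closure {x \<in> D. norm x + norm (T x) \<le> M + M * KF} \<inter>
      closure {x \<in> D \<inter> Z. norm x + norm (T x + F x) \<le> M})"
    by (rule compact_Int_closed) simp
  then show "compact (closure {x \<in> D \<inter> Z. norm x + norm (T x + F x) \<le> M})"
    using sub by (simp add: Int_absorb1)
qed

lemma restrict_perturb:
  assumes Z: "closed Z" "subspace Z" and F: "bounded_linear F"
  shows "closed_operator_compact_domain (D \<inter> Z) (\<lambda>x. T x + F x)"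
proof
  show "subspace (D \<inter> Z)" using subspace_domain Z(2) by (rule subspace_inter)
  show "T (x + y) + F (x + y) = (T x + F x) + (T y + F y)" if "x \<in> D \<inter> Z" "y \<in> D \<inter> Z" for x y
    using add[of x y] that F by (simp add: linear_simps)
  show "T (c *\<^sub>R x) + F (c *\<^sub>R x) = c *\<^sub>R (T x + F x)" if "x \<in> D \<inter> Z" for c x
    using scale[of x c] that F by (simp add: linear_simps scaleR_add_right)
qed (use Z F closed_op_restrict_perturb compactly_embedded_restrict_perturb in auto)

lemma finite_rank_perturbation_surj:
  assumes Z: "closed Z" "subspace Z" and F: "bounded_linear F"
    and bij: "inj_on (\<lambda>y. T y + F y) (D \<inter> Z)" "(\<lambda>y. T y + F y) ` (D \<inter> Z) = UNIV"
    and K: "bounded_linear K" and injK: "inj_on (\<lambda>x. T x - K x) D"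
  shows "(\<lambda>x. T x - K x) ` D = UNIV"
proof -
  interpret TF: closed_operator_compact_domain "D \<inter> Z" "\<lambda>x. T x + F x"
    using Z F by (rule restrict_perturb)
  have "bounded_linear (\<lambda>x. K x + F x)" using K F by (rule bounded_linear_add)
  moreover have "inj_on (\<lambda>x. (T x + F x) - (K x + F x)) (D \<inter> Z)"
    using injK by (auto intro: inj_on_subset)
  ultimately have "(\<lambda>x. (T x + F x) - (K x + F x)) ` (D \<inter> Z) = UNIV"
    by (rule TF.compact_perturbation_surj[OF bij])
  then show ?thesis by auto
qed

end
lemma span_Un_remove_redundant:
  assumes fin: "finite C" and e0: "e0 \<in> C" "a e0 \<noteq> 0" and sum: "(\<Sum>e\<in>C. a e *\<^sub>R e) \<in> R"
  shows "span (R \<union> (C - {e0})) = span (R \<union> C)"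
proof -
  define Sp where "Sp = span (R \<union> (C - {e0}))"
  have "a e0 *\<^sub>R e0 = (\<Sum>e\<in>C. a e *\<^sub>R e) - (\<Sum>e\<in>C - {e0}. a e *\<^sub>R e)"
    using fin e0(1) by (simp add: sum.remove)
  moreover have "(\<Sum>e\<in>C. a e *\<^sub>R e) \<in> Sp" unfolding Sp_def using sum by (simp add: span_base)
  moreover have "(\<Sum>e\<in>C - {e0}. a e *\<^sub>R e) \<in> Sp" unfolding Sp_def
    by (intro span_sum span_scale span_base) auto
  ultimately have "a e0 *\<^sub>R e0 \<in> Sp" unfolding Sp_def by (simp add: span_diff)
  then have "(1 / a e0) *\<^sub>R (a e0 *\<^sub>R e0) \<in> Sp" unfolding Sp_def by (rule span_scale)
  then have "e0 \<in> Sp" using e0(2) by simp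
  then have "R \<union> C \<subseteq> Sp" unfolding Sp_def by (auto intro: span_base)
  then have "span (R \<union> C) \<subseteq> Sp" unfolding Sp_def by (rule span_minimal) simp
  moreover have "Sp \<subseteq> span (R \<union> C)" unfolding Sp_def by (rule span_mono) blast
  ultimately show ?thesis unfolding Sp_def by blast
qed

text \<open>A complement of minimal cardinality is linearly independent modulo R.\<close>
lemma minimal_complement:
  assumes fin: "finite C" and span: "span (R \<union> C) = UNIV"
  obtains C' where "C' \<subseteq> C" "span (R \<union> C') = UNIV"
    "\<forall>a. (\<Sum>e\<in>C'. a e *\<^sub>R e) \<in> R \<longrightarrow> (\<forall>e\<in>C'. a e = 0)"
proof -
  have "C \<subseteq> C \<and> span (R \<union> C) = UNIV" using span by simp
  from ex_has_least_nat[where P="\<lambda>c. c \<subseteq> C \<and> span (R \<union> c) = UNIV" and m=card, OF this]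
  obtain C' where C': "C' \<subseteq> C" "span (R \<union> C') = UNIV"
    and min: "\<forall>c. c \<subseteq> C \<and> span (R \<union> c) = UNIV \<longrightarrow> card C' \<le> card c"
    by auto
  have fin': "finite C'" using C'(1) fin by (rule finite_subset)
  have "\<forall>e\<in>C'. a e = 0" if sum: "(\<Sum>e\<in>C'. a e *\<^sub>R e) \<in> R" for a
  proof (rule ccontr)
    assume "\<not> (\<forall>e\<in>C'. a e = 0)"
    then obtain e0 where e0: "e0 \<in> C'" "a e0 \<noteq> 0" by blast
    have "span (R \<union> (C' - {e0})) = UNIV"
      using span_Un_remove_redundant[OF fin' e0 sum] C'(2) by simp
    moreover have "C' - {e0} \<subseteq> C" using C'(1) by blast
    ultimately have "card C' \<le> card (C' - {e0})" using min by blast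
    moreover have "card (C' - {e0}) < card C'" using fin' e0(1) by (rule card_Diff1_less)
    ultimately show False by simp
  qed
  with C' show ?thesis by (intro that) auto
qed

lemma biorthogonal_coordinate:
  fixes N :: "'a::real_normed_vector set"
  assumes "finite N" "linear p" "b0 \<in> N" "\<And>b. b \<in> N \<Longrightarrow> p b = (if b = b0 then 1 else 0)"
  shows "p (\<Sum>b\<in>N. c b *\<^sub>R b) = c b0"
proof -
  have "p (\<Sum>b\<in>N. c b *\<^sub>R b) = (\<Sum>b\<in>N. c b * p b)"
    using assms(2) by (simp add: linear_sum linear_scale)
  also have "\<dots> = (\<Sum>b\<in>N. (if b = b0 then c b else 0))"
    by (rule sum.cong) (auto simp: assms(4))
  also have "\<dots> = c b0" using assms(1,3) by simp
  finally show ?thesis .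
qed
context closed_operator_compact_domain
begin

lemma range_subspace: "subspace (T ` D)"
  unfolding subspace_def
proof (intro conjI ballI allI)
  show "0 \<in> T ` D" using zero subspace_0[OF subspace_domain] by (metis image_eqI)
next
  fix x y assume "x \<in> T ` D" "y \<in> T ` D"
  then obtain a b where ab: "a \<in> D" "b \<in> D" "x = T a" "y = T b" by blast
  then have "x + y = T (a + b)" using add by simp
  moreover have "a + b \<in> D" using ab subspace_add[OF subspace_domain] by simp
  ultimately show "x + y \<in> T ` D" by blast
next
  fix c x assume "x \<in> T ` D"
  then obtain a where a: "a \<in> D" "x = T a" by blast
  then have "c *\<^sub>R x = T (c *\<^sub>R a)" using scale by simp
  moreover have "c *\<^sub>R a \<in> D" using a subspace_scale[OF subspace_domain] by simp
  ultimately show "c *\<^sub>R x \<in> T ` D" by blast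
qed

text \<open>Given a basis N of the null space with biorthogonal coordinates \<phi>, and a complement C
  of the range that is independent modulo the range and injected into N by h, the rank |C|
  operator F sends the coordinate of h e to e. Restricted to the closed subspace Z where the
  unmatched coordinates vanish, T + F is a bijection onto X.\<close>
context
  fixes N C :: "'a set" and \<phi> :: "'a \<Rightarrow> 'a \<Rightarrow> real" and h :: "'a \<Rightarrow> 'a"
  assumes null_basis: "finite N" "span N = {x \<in> D. T x = 0}"
    and coordinates: "\<And>b. b \<in> N \<Longrightarrow> bounded_linear (\<phi> b)"
      "\<And>b b'. b \<in> N \<Longrightarrow> b' \<in> N \<Longrightarrow> \<phi> b b' = (if b' = b then 1 else 0)"
    and complement: "finite C" "span (T ` D \<union> C) = UNIV"
      "\<forall>a. (\<Sum>e\<in>C. a e *\<^sub>R e) \<in> T ` D \<longrightarrow> (\<forall>e\<in>C. a e = 0)"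
    and matching: "h ` C \<subseteq> N" "inj_on h C"
begin

lemma coordinate_expansion:
  assumes "b0 \<in> N"
  shows "\<phi> b0 (\<Sum>b\<in>N. c b *\<^sub>R b) = c b0"
  using null_basis(1) bounded_linear.linear[OF coordinates(1)[OF assms]] assms
  by (rule biorthogonal_coordinate) (simp add: coordinates(2)[OF assms])

lemma null_space_eq_zero:
  assumes "w \<in> span N" "\<And>b. b \<in> N \<Longrightarrow> \<phi> b w = 0"
  shows "w = 0"
proof -
  obtain c where w: "w = (\<Sum>b\<in>N. c b *\<^sub>R b)" using span_finite[OF null_basis(1)] assms(1) by blast
  then have "c b = 0" if "b \<in> N" for b using assms(2)[OF that] coordinate_expansion[OF that] by simp
  then show ?thesis using w by simp
qed

lemma finite_rank_perturbation_kernel: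
  assumes w: "w \<in> D" "\<forall>b\<in>N - h ` C. \<phi> b w = 0"
    and eq: "T w + (\<Sum>e\<in>C. \<phi> (h e) w *\<^sub>R e) = 0"
  shows "w = 0"
proof -
  have "T w = - (\<Sum>e\<in>C. \<phi> (h e) w *\<^sub>R e)" using eq by (simp add: eq_neg_iff_add_eq_0)
  then have "(\<Sum>e\<in>C. (- \<phi> (h e) w) *\<^sub>R e) = T w" by (simp add: sum_negf)
  then have "(\<Sum>e\<in>C. (- \<phi> (h e) w) *\<^sub>R e) \<in> T ` D" using w(1) by blast
  then have matched: "\<forall>e\<in>C. \<phi> (h e) w = 0" using complement(3) by fastforce
  then have "T w = 0" using eq by simp
  then have "w \<in> span N" using null_basis(2) w(1) by blast
  moreover have "\<phi> b w = 0" if "b \<in> N" for b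
    using matched w(2) that by (cases "b \<in> h ` C") auto
  ultimately show ?thesis by (rule null_space_eq_zero)
qed

text \<open>Write x = T z + s with s in span C, and correct z by a null space vector so that
  its coordinate at h e becomes the coefficient of e in s, and all other coordinates vanish.\<close>
lemma finite_rank_perturbation_onto:
  obtains y where "y \<in> D" "\<forall>b\<in>N - h ` C. \<phi> b y = 0" "T y + (\<Sum>e\<in>C. \<phi> (h e) y *\<^sub>R e) = x"
proof -
  have "x \<in> span (T ` D \<union> C)" using complement(2) by simp
  then obtain r s where rs: "x = r + s" "r \<in> span (T ` D)" "s \<in> span C"
    unfolding span_Un by blast
  have "r \<in> T ` D" using rs(2) span_eq_iff[THEN iffD2, OF range_subspace] by (simp only:)
  then obtain z where z: "z \<in> D" "r = T z" by blast
  obtain a where a: "s = (\<Sum>e\<in>C. a e *\<^sub>R e)" using rs(3) span_finite[OF complement(1)] by blast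
  define c where "c b = (if b \<in> h ` C then a (the_inv_into C h b) else 0)" for b
  have ch: "c (h e) = a e" if "e \<in> C" for e
    using that matching(2) by (simp add: c_def the_inv_into_f_f)
  define y where "y = z - (\<Sum>b\<in>N. \<phi> b z *\<^sub>R b) + (\<Sum>b\<in>N. c b *\<^sub>R b)"
  have null: "(\<Sum>b\<in>N. d b *\<^sub>R b) \<in> D" "T (\<Sum>b\<in>N. d b *\<^sub>R b) = 0" for d
    using null_basis(2) span_sum[of N "\<lambda>b. d b *\<^sub>R b"] span_scale span_base by blast+
  have "y \<in> D" unfolding y_def using z(1) null subspace_domain
    by (simp add: subspace_add subspace_diff)
  moreover have Ty: "T y = T z"
    unfolding y_def using z(1) null subspace_domain by (simp add: add diff subspace_diff)
  moreover have \<phi>y: "\<phi> b y = c b" if "b \<in> N" for b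
    unfolding y_def using that coordinate_expansion[OF that]
      bounded_linear.linear[OF coordinates(1)[OF that]] by (simp add: linear_add linear_diff)
  then have "\<forall>b\<in>N - h ` C. \<phi> b y = 0" by (simp add: c_def)
  moreover have "(\<Sum>e\<in>C. \<phi> (h e) y *\<^sub>R e) = s"
    unfolding a using matching(1) \<phi>y ch by (intro sum.cong) auto
  ultimately show ?thesis using that rs(1) z(2) by simp
qed

lemma finite_rank_perturbation_bijective:
  defines "F \<equiv> \<lambda>y. \<Sum>e\<in>C. \<phi> (h e) y *\<^sub>R e" and "Z \<equiv> {y. \<forall>b\<in>N - h ` C. \<phi> b y = 0}"
  shows "closed Z" "subspace Z" "bounded_linear F"
    "inj_on (\<lambda>y. T y + F y) (D \<inter> Z)" "(\<lambda>y. T y + F y) ` (D \<inter> Z) = UNIV"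
proof -
  have hN: "h e \<in> N" if "e \<in> C" for e using matching(1) that by blast
  show F: "bounded_linear F"
    unfolding F_def using coordinates(1)[OF hN]
    by (intro bounded_linear_sum bounded_linear_compose[OF bounded_linear_scaleR_left]) auto
  have "Z = (\<Inter>b\<in>N - h ` C. {y. \<phi> b y = 0})" unfolding Z_def by blast
  then show "closed Z"
    using coordinates(1) by (auto intro!: closed_INT closed_Collect_eq linear_continuous_on)
  show Z: "subspace Z"
    unfolding subspace_def Z_def using coordinates(1) by (auto simp: linear_simps)
  show "inj_on (\<lambda>y. T y + F y) (D \<inter> Z)"
  proof (rule inj_onI)
    fix y y' assume y: "y \<in> D \<inter> Z" "y' \<in> D \<inter> Z" and eq: "T y + F y = T y' + F y'"
    have "T (y - y') + F (y - y') = (T y + F y) - (T y' + F y')"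
      using diff[of y y'] y F by (simp add: linear_simps)
    then have "T (y - y') + F (y - y') = 0" using eq by simp
    moreover have "y - y' \<in> D" "y - y' \<in> Z"
      using y subspace_domain Z by (simp_all add: subspace_diff)
    ultimately have "y - y' = 0"
      using finite_rank_perturbation_kernel unfolding F_def Z_def by blast
    then show "y = y'" by simp
  qed
  have "x \<in> (\<lambda>y. T y + F y) ` (D \<inter> Z)" for x
  proof -
    obtain y where "y \<in> D" "\<forall>b\<in>N - h ` C. \<phi> b y = 0" "T y + (\<Sum>e\<in>C. \<phi> (h e) y *\<^sub>R e) = x"
      by (rule finite_rank_perturbation_onto)
    then show ?thesis unfolding F_def Z_def by (intro image_eqI[of _ _ y]) auto
  qed
  then show "(\<lambda>y. T y + F y) ` (D \<inter> Z) = UNIV" by blast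
qed

end

end
lemma (in closed_operator_compact_domain) nullity_less_deficiency:
  assumes N: "finite N" "independent N" "span N = null_space D T"
    and C: "finite C" "span (range_op D T \<union> C) = UNIV"
    and K: "bounded_linear K" "inj_on (\<lambda>x. T x - K x) D" "(\<lambda>x. T x - K x) ` D \<noteq> UNIV"
  shows "card N < card C"
proof (rule ccontr)
  assume "\<not> card N < card C"
  obtain C' where C': "C' \<subseteq> C" "span (T ` D \<union> C') = UNIV"
    "\<forall>a. (\<Sum>e\<in>C'. a e *\<^sub>R e) \<in> T ` D \<longrightarrow> (\<forall>e\<in>C'. a e = 0)"
    using C unfolding range_op_def by (rule minimal_complement)
  have fin: "finite C'" using C'(1) C(1) by (rule finite_subset)
  have "card C' \<le> card N" using card_mono[OF C(1) C'(1)] \<open>\<not> card N < card C\<close> by linarith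
  then obtain h where h: "h ` C' \<subseteq> N" "inj_on h C'" using card_le_inj[OF fin N(1)] by blast
  obtain \<phi> :: "'a \<Rightarrow> 'a \<Rightarrow> real" where \<phi>: "\<forall>b\<in>N. bounded_linear (\<phi> b)"
    "\<forall>b\<in>N. \<forall>b'\<in>N. \<phi> b b' = (if b' = b then 1 else 0)"
    by (rule coordinate_functionals[OF N(1,2)])
  note bij = finite_rank_perturbation_bijective[OF N(1) N(3)[unfolded null_space_def]
      \<phi>[rule_format] fin C'(2,3) h]
  have "(\<lambda>x. T x - K x) ` D = UNIV" by (rule finite_rank_perturbation_surj[OF bij K(1,2)])
  then show False using K(3) by simp
qed

lemma J_notin_span_insert:
  fixes J :: "'a::real_vector \<Rightarrow> 'a"
  assumes J: "linear J" "\<And>x. J (J x) = - x"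
    and U: "subspace U" "\<And>x. x \<in> U \<Longrightarrow> J x \<in> U" and v: "v \<notin> U"
  shows "J v \<notin> span (insert v U)"
proof
  assume "J v \<in> span (insert v U)"
  then obtain t where "J v - t *\<^sub>R v \<in> span U" by (auto simp: span_breakdown_eq)
  then have u1: "J v - t *\<^sub>R v \<in> U" using U(1) by (simp add: span_eq_iff[THEN iffD2])
  have "J (J v - t *\<^sub>R v) \<in> U" by (rule U(2)[OF u1])
  then have u2: "- v - t *\<^sub>R J v \<in> U" using J by (simp add: linear_diff linear_scale)
  text \<open>Eliminating J v leaves (1 + t^2) v in U.\<close>
  have "(- v - t *\<^sub>R J v) + t *\<^sub>R (J v - t *\<^sub>R v) \<in> U"
    using u1 u2 U(1) by (simp add: subspace_add subspace_scale)
  then have w: "(- 1 - t * t) *\<^sub>R v \<in> U" by (simp add: algebra_simps)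
  have "- 1 - t * t \<noteq> 0" by (smt (verit) zero_le_square)
  then have "v = (1 / (- 1 - t * t)) *\<^sub>R ((- 1 - t * t) *\<^sub>R v)" by simp
  then have "v \<in> U" using subspace_scale[OF U(1) w] by metis
  then show False using v by simp
qed
lemma span_J_pairs_J_closed:
  fixes J :: "'a::real_vector \<Rightarrow> 'a"
  assumes J: "linear J" "\<And>x. J (J x) = - x" and x: "x \<in> span (B \<union> J ` B)"
  shows "J x \<in> span (B \<union> J ` B)"
proof -
  have "- b \<in> span (B \<union> J ` B)" if "b \<in> B" for b
    using that by (intro span_neg span_base) simp
  then have "J ` (B \<union> J ` B) \<subseteq> span (B \<union> J ` B)"
    using J(2) by (auto intro: span_base)
  then have "span (J ` (B \<union> J ` B)) \<subseteq> span (B \<union> J ` B)" by (simp add: span_minimal)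
  then show ?thesis using x span_linear_image[OF J(1)] by blast
qed

lemma independent_insert_J_pair:
  fixes J :: "'a::real_vector \<Rightarrow> 'a"
  assumes J: "linear J" "\<And>x. J (J x) = - x"
    and fin: "finite B" and ind: "independent (B \<union> J ` B)" and v: "v \<notin> span (B \<union> J ` B)"
  shows "independent (insert v B \<union> J ` insert v B)"
    and "card (insert v B \<union> J ` insert v B) = card (B \<union> J ` B) + 2"
proof -
  have eq: "insert v B \<union> J ` insert v B = insert (J v) (insert v (B \<union> J ` B))" by auto
  have "J v \<notin> span (insert v (span (B \<union> J ` B)))"
    using J span_J_pairs_J_closed[OF J] v by (intro J_notin_span_insert) auto
  moreover have "span (insert v (B \<union> J ` B)) \<subseteq> span (insert v (span (B \<union> J ` B)))"
    by (intro span_mono insert_mono span_superset)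
  ultimately have Jv: "J v \<notin> span (insert v (B \<union> J ` B))" by (meson in_mono)
  have vnot: "v \<notin> B \<union> J ` B" using v span_base[of v "B \<union> J ` B"] by meson
  have Jvnot: "J v \<notin> insert v (B \<union> J ` B)" using Jv span_base[of "J v"] by meson
  have "independent (insert v (B \<union> J ` B))" using ind v vnot by (simp add: independent_insert)
  then show "independent (insert v B \<union> J ` insert v B)"
    unfolding eq using Jv Jvnot by (simp add: independent_insert)
  show "card (insert v B \<union> J ` insert v B) = card (B \<union> J ` B) + 2"
    unfolding eq using fin vnot Jvnot by simp
qed

lemma complex_basis_from_spanning_set:
  fixes J :: "'a::real_vector \<Rightarrow> 'a"
  assumes J: "linear J" "\<And>x. J (J x) = - x" and V: "subspace V" "\<And>x. x \<in> V \<Longrightarrow> J x \<in> V"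
    and S: "finite S" "V = span S"
  shows "\<exists>B. finite B \<and> span (B \<union> J ` B) = V \<and> 2 * card B \<le> card S"
proof -
  have bound: "card I \<le> card S" if "independent I" "I \<subseteq> V" for I
    using independent_span_bound[OF S(1) that(1)] that(2) S(2) by blast
  have "\<exists>B'. finite B' \<and> span (B' \<union> J ` B') = V \<and> 2 * card B' \<le> card S"
    if "finite B" "B \<subseteq> V" "independent (B \<union> J ` B)" "card (B \<union> J ` B) = 2 * card B" for B
    using that
  proof (induction "card S - card (B \<union> J ` B)" arbitrary: B rule: less_induct)
    case (less B)
    have BV: "B \<union> J ` B \<subseteq> V" using less.prems(2) V(2) by blast
    show ?case
    proof (cases "span (B \<union> J ` B) = V")
      case True
      then show ?thesis using bound[OF less.prems(3) BV] less.prems by auto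
    next
      case False
      moreover have "span (B \<union> J ` B) \<subseteq> V" using BV V(1) by (rule span_minimal)
      ultimately obtain v where v: "v \<in> V" "v \<notin> span (B \<union> J ` B)" by blast
      note ext = independent_insert_J_pair[OF J less.prems(1,3) v(2)]
      have "v \<notin> B" using v(2) span_base[of v "B \<union> J ` B"] by blast
      then have "card (insert v B \<union> J ` insert v B) = 2 * card (insert v B)"
        using ext(2) less.prems(1,4) by simp
      moreover have "insert v B \<subseteq> V" using v(1) less.prems(2) by blast
      moreover have "card S - card (insert v B \<union> J ` insert v B) < card S - card (B \<union> J ` B)"
        using bound[OF ext(1)] \<open>insert v B \<subseteq> V\<close> V(2) ext(2) by (fastforce simp: image_subset_iff)
      ultimately show ?thesis using less.hyps less.prems(1) ext(1) by blast
    qed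
  qed
  from this[of "{}"] show ?thesis by (simp add: independent_empty)
qed
lemma two_cdim_le_card_spanning:
  fixes J :: "'a::banach \<Rightarrow> 'a"
  assumes "linear J" "\<And>x. J (J x) = - x" "subspace V" "\<And>x. x \<in> V \<Longrightarrow> J x \<in> V"
    and "finite S" "span S = V"
  shows "2 * cdim J V \<le> card S"
proof -
  obtain B where B: "finite B" "span (B \<union> J ` B) = V" "2 * card B \<le> card S"
    using complex_basis_from_spanning_set[OF assms(1-5) assms(6)[symmetric]] by blast
  have "cdim J V \<le> card B"
    unfolding cdim_def using B(1,2) by (intro Least_le) (auto simp: cspan_def)
  then show ?thesis using B(3) by linarith
qed

lemma real_complement_of_finite_codim:
  assumes "finite_codim J R" "\<And>y. y \<in> R \<Longrightarrow> J y \<in> R"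
  obtains C where "finite C" "span (R \<union> C) = UNIV" "card C \<le> 2 * codim J R"
proof -
  have "\<exists>n B. finite B \<and> card B = n \<and> cspan J (R \<union> B) = UNIV"
    using assms(1) unfolding finite_codim_def by blast
  from LeastI_ex[OF this] obtain B where B: "finite B" "card B = codim J R" "cspan J (R \<union> B) = UNIV"
    unfolding codim_def by blast
  have "card (B \<union> J ` B) \<le> card B + card (J ` B)" by (rule card_Un_le)
  also have "card (J ` B) \<le> card B" by (rule card_image_le[OF B(1)])
  finally have card: "card (B \<union> J ` B) \<le> 2 * codim J R" using B(2) by simp
  have "(R \<union> B) \<union> J ` (R \<union> B) \<subseteq> R \<union> (B \<union> J ` B)" using assms(2) by auto
  then have "span ((R \<union> B) \<union> J ` (R \<union> B)) \<subseteq> span (R \<union> (B \<union> J ` B))" by (rule span_mono)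
  then have "UNIV \<subseteq> span (R \<union> (B \<union> J ` B))" using B(3) unfolding cspan_def by (simp only:)
  then have "span (R \<union> (B \<union> J ` B)) = UNIV" by (rule top_le)
  moreover have "finite (B \<union> J ` B)" using B(1) by simp
  ultimately show ?thesis using card by (intro that)
qed

lemma real_basis_of_cfinite_dim:
  assumes "cfinite_dim J N"
  obtains Nb where "finite Nb" "independent Nb" "span Nb = N"
proof -
  obtain B where B: "finite B" "span (B \<union> J ` B) = N"
    using assms unfolding cfinite_dim_def cspan_def by blast
  obtain Nb where Nb: "Nb \<subseteq> B \<union> J ` B" "independent Nb" "B \<union> J ` B \<subseteq> span Nb"
    by (rule maximal_independent_subset)
  have "span Nb = N"
    using span_mono[OF Nb(1)] span_mono[OF Nb(3)] B(2) by (simp add: span_span)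
  moreover have "finite Nb" using finite_subset[OF Nb(1)] B(1) by simp
  ultimately show ?thesis using Nb(2) by (intro that)
qed
lemma composition_closed_operator_compact_domain:
  assumes A: "clinear_on J DA A" and B: "bounded_linear B"
    and "fredholm J {x. B x \<in> DA} (\<lambda>x. A (B x))"
    and "compactly_embedded {x. B x \<in> DA} (\<lambda>x. A (B x))"
  shows "closed_operator_compact_domain {x. B x \<in> DA} (\<lambda>x. A (B x))"
proof
  have DA: "subspace DA" and Aadd: "\<And>x y. x \<in> DA \<Longrightarrow> y \<in> DA \<Longrightarrow> A (x + y) = A x + A y"
    and Asc: "\<And>c x. x \<in> DA \<Longrightarrow> A (c *\<^sub>R x) = c *\<^sub>R A x"
    using A unfolding clinear_on_def csubspace_def by auto
  have Blin: "linear B" using B by (rule bounded_linear.linear)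
  show "subspace {x. B x \<in> DA}"
    unfolding subspace_def using DA Blin
    by (auto simp: linear_add linear_scale linear_0 subspace_add subspace_scale subspace_0)
  show "A (B (x + y)) = A (B x) + A (B y)" if "x \<in> {x. B x \<in> DA}" "y \<in> {x. B x \<in> DA}" for x y
    using that Aadd Blin by (simp add: linear_add)
  show "A (B (c *\<^sub>R x)) = c *\<^sub>R A (B x)" if "x \<in> {x. B x \<in> DA}" for c x
    using that Asc Blin by (simp add: linear_scale)
qed (use assms(3,4) in \<open>simp_all add: fredholm_def\<close>)

lemma composition_J_invariant:
  assumes J: "cstruct J" and A: "clinear_on J DA A" and BJ: "\<forall>x. B (J x) = J (B x)"
  shows "x \<in> null_space {x. B x \<in> DA} (\<lambda>x. A (B x)) \<Longrightarrow> J x \<in> null_space {x. B x \<in> DA} (\<lambda>x. A (B x))"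
    and "y \<in> range_op {x. B x \<in> DA} (\<lambda>x. A (B x)) \<Longrightarrow> J y \<in> range_op {x. B x \<in> DA} (\<lambda>x. A (B x))"
proof -
  have DAJ: "\<And>x. x \<in> DA \<Longrightarrow> J x \<in> DA" and AJ: "\<And>x. x \<in> DA \<Longrightarrow> A (J x) = J (A x)"
    using A unfolding clinear_on_def csubspace_def by auto
  have J0: "J 0 = 0" using J unfolding cstruct_def by (simp add: linear_simps)
  show "x \<in> null_space {x. B x \<in> DA} (\<lambda>x. A (B x)) \<Longrightarrow> J x \<in> null_space {x. B x \<in> DA} (\<lambda>x. A (B x))"
    using BJ DAJ AJ J0 by (simp add: null_space_def)
  assume "y \<in> range_op {x. B x \<in> DA} (\<lambda>x. A (B x))"
  then obtain x where x: "B x \<in> DA" "y = A (B x)" unfolding range_op_def by blast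
  then have "J y = A (B (J x))" "B (J x) \<in> DA" using BJ DAJ AJ by simp_all
  then show "J y \<in> range_op {x. B x \<in> DA} (\<lambda>x. A (B x))" unfolding range_op_def by blast
qed

lemma resolvent_shift:
  assumes J: "cstruct J" and B: "bounded_linear B" "inj B" and d: "d \<in> DA" "d \<notin> range B"
    and z: "z \<in> resolvent_set J DA A"
  obtains K where "bounded_linear K" "inj_on (\<lambda>x. A (B x) - K x) {x. B x \<in> DA}"
    "(\<lambda>x. A (B x) - K x) ` {x. B x \<in> DA} \<noteq> UNIV"
proof -
  obtain R where R: "\<And>x. x \<in> DA \<Longrightarrow> R (A x - cscale J z x) = x"
    using z unfolding resolvent_set_def by blast
  define K where "K x = cscale J z (B x)" for x
  have "bounded_linear (\<lambda>x. Re z *\<^sub>R B x + Im z *\<^sub>R J (B x))"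
    using J B(1) unfolding cstruct_def
    by (intro bounded_linear_add bounded_linear_compose[OF bounded_linear_scaleR_right])
      (auto intro: bounded_linear_compose)
  then have "bounded_linear K" unfolding K_def cscale_def .
  moreover have RK: "R (A (B x) - K x) = B x" if "B x \<in> DA" for x
    using R[OF that] by (simp add: K_def)
  have "inj_on (\<lambda>x. A (B x) - K x) {x. B x \<in> DA}"
  proof (rule inj_onI)
    fix x y assume "x \<in> {x. B x \<in> DA}" "y \<in> {x. B x \<in> DA}" and eq: "A (B x) - K x = A (B y) - K y"
    then have "B x = B y" using RK[of x] RK[of y] by simp
    then show "x = y" by (rule injD[OF B(2)])
  qed
  moreover have "A d - cscale J z d \<notin> (\<lambda>x. A (B x) - K x) ` {x. B x \<in> DA}"
  proof
    assume "A d - cscale J z d \<in> (\<lambda>x. A (B x) - K x) ` {x. B x \<in> DA}"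
    then obtain x where "B x \<in> DA" "A d - cscale J z d = A (B x) - K x" by blast
    then have "B x = d" using RK[of x] R[OF d(1)] by simp
    then show False using d(2) by blast
  qed
  ultimately show ?thesis using \<open>bounded_linear K\<close> by (intro that) auto
qed

theorem mainTheorem15:
  fixes J :: "'a::banach \<Rightarrow> 'a" and DA :: "'a set" and A B :: "'a \<Rightarrow> 'a"
  assumes "cstruct J"
    and "clinear_on J DA A" and "closed_op DA A" and "densely_defined DA"
    and "bounded_linear B" and "\<forall>x. B (J x) = J (B x)" and "inj B"
    and "\<not> DA \<subseteq> range B"
    and "fredholm J {x. B x \<in> DA} (\<lambda>x. A (B x))"
    and "compactly_embedded {x. B x \<in> DA} (\<lambda>x. A (B x))"
    and "resolvent_set J DA A \<noteq> {}"
  shows "op_index J {x. B x \<in> DA} (\<lambda>x. A (B x)) < 0"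
proof -
  let ?D = "{x. B x \<in> DA}" and ?T = "\<lambda>x. A (B x)"
  interpret closed_operator_compact_domain ?D ?T
    using assms(2,5,9,10) by (rule composition_closed_operator_compact_domain)
  have J: "linear J" "\<And>x. J (J x) = - x"
    using assms(1) unfolding cstruct_def by (auto intro: bounded_linear.linear)
  obtain K where K: "bounded_linear K" "inj_on (\<lambda>x. ?T x - K x) ?D" "(\<lambda>x. ?T x - K x) ` ?D \<noteq> UNIV"
    using assms(8,11) resolvent_shift[OF assms(1,5,7)] by blast
  obtain N where N: "finite N" "independent N" "span N = null_space ?D ?T"
    using assms(9) unfolding fredholm_def by (auto elim: real_basis_of_cfinite_dim)
  obtain C where C: "finite C" "span (range_op ?D ?T \<union> C) = UNIV" "card C \<le> 2 * codim J (range_op ?D ?T)"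
    using assms(9) composition_J_invariant(2)[OF assms(1,2,6)] unfolding fredholm_def
    by (auto elim: real_complement_of_finite_codim)
  have "card N < card C" by (rule nullity_less_deficiency[OF N C(1,2) K])
  moreover have "2 * cdim J (null_space ?D ?T) \<le> card N"
    using N(3) composition_J_invariant(1)[OF assms(1,2,6)]
    by (intro two_cdim_le_card_spanning[OF J _ _ N(1)]) (auto simp: N(3)[symmetric])
  ultimately show ?thesis using C(3) by (simp add: op_index_def)
qed

end
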